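(* Let $\omega:[0,\infty)\to[0,\infty)$ be decreasing with $0<\int_0^\infty t^{\alpha-1}\omega(t)\,dt<\infty$ for all $\alpha>0$ and $0<\int_0^\infty t^{\alpha-1}(\omega(0)-\omega(t))\,dt<\infty$ for all $-1<\alpha<0$. Let $\varphi:[0,\infty)\to[0,\infty)$ be non-zero with $\varphi(0)=0$ such that $t\mapsto\varphi(t)$ and $t\mapsto\varphi(t)/t$ are increasing on $(0,\infty)$. Then \[\zeta(\alpha)=\begin{cases}\Big(\dfrac{\int_0^\infty t^{\alpha-1}\omega(\varphi(t))\,dt}{\int_0^\infty t^{\alpha-1}\omega(t)\,dt}\Big)^{1/\alpha}&\alpha>0,\\[2mm]\exp\Big(\displaystyle\int_0^\infty\frac{\omega(\varphi(t))-\omega(t)}{t\,\omega(0)}\,dt\Big)&\alpha=0,\\[2mm]\Big(\dfrac{\int_0^\infty t^{\alpha-1}(\omega(\varphi(t))-\omega(0))\,dt}{\int_0^\infty t^{\alpha-1}(\omega(t)-\omega(0))\,dt}\Big)^{1/\alpha}&-1<\alpha<0,\end{cases}\] is a continuous, decreasing function of $\alpha$ on $(-1,\infty)$. Moreover, $\zeta$ is constant on $(-1,\infty)$ if $\varphi(t)=\lambda t$ on $[0,\infty)$ for some $\lambda>0$. *)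

theory Defs
  imports "HOL-Analysis.Analysis"
begin

definition zeta :: "(real \<Rightarrow> real) \<Rightarrow> (real \<Rightarrow> real) \<Rightarrow> real \<Rightarrow> real" where
  "zeta \<omega> \<phi> \<alpha> =
    (if \<alpha> > 0 then
       ((LINT t:{0<..}|lborel. t powr (\<alpha> - 1) * \<omega> (\<phi> t)) /
        (LINT t:{0<..}|lborel. t powr (\<alpha> - 1) * \<omega> t)) powr (1 / \<alpha>)
     else if \<alpha> = 0 then
       exp (LINT t:{0<..}|lborel. (\<omega> (\<phi> t) - \<omega> t) / (t * \<omega> 0))
     else
       ((LINT t:{0<..}|lborel. t powr (\<alpha> - 1) * (\<omega> (\<phi> t) - \<omega> 0)) /
        (LINT t:{0<..}|lborel. t powr (\<alpha> - 1) * (\<omega> t - \<omega> 0))) powr (1 / \<alpha>))"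

end

theory Submission
  imports Defs
begin

text \<open>For \<open>\<alpha> \<noteq> 0\<close>, \<open>zeta \<alpha> powr \<alpha>\<close> is the ratio of the Mellin transforms at \<open>\<alpha>\<close> of
  \<open>\<omega> \<circ> \<phi>\<close> and of \<open>\<omega>\<close> (both shifted by \<open>\<omega> 0\<close> when \<open>\<alpha> < 0\<close>). If \<open>zeta \<alpha> = z\<close>, the Mellin
  transform of \<open>\<omega> \<circ> \<phi> - \<omega> (t / z)\<close> vanishes at \<open>\<alpha>\<close>; since \<open>\<phi> t / t\<close> increases, this
  function is positive only before it is negative, so multiplying it by the increasing weight
  \<open>t powr (\<beta> - \<alpha>)\<close> makes its transform \<open>\<le> 0\<close> at every \<open>\<beta> > \<alpha>\<close>, which says \<open>zeta \<beta> \<le> z\<close>.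
  Away from \<open>0\<close>, continuity is dominated convergence. Near \<open>0\<close>, \<open>\<alpha>\<close> times the denominator
  tends to \<open>\<omega> 0\<close> while the difference of numerator and denominator is continuous, so
  \<open>zeta \<alpha> = (1 + \<alpha> x \<alpha>) powr (1 / \<alpha>)\<close> with \<open>x \<alpha> \<rightarrow> \<integral> (\<omega> \<circ> \<phi> - \<omega>) / t / \<omega> 0\<close>; this is
  continuity at \<open>0\<close>, and monotonicity through \<open>0\<close> follows in the limit. For \<open>\<phi> t = l * t\<close> the
  substitution \<open>t \<mapsto> l t\<close> makes the ratio \<open>l powr (- \<alpha>)\<close>, so \<open>zeta\<close> is constantly \<open>1 / l\<close>.\<close>

lemma powr_le_powr_add_powr:
  fixes t :: real
  assumes "t > 0" "a \<le> x" "x \<le> b"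
  shows "t powr x \<le> t powr a + t powr b"
proof (cases "t \<le> 1")
  case True
  then have "t powr x \<le> t powr a" using assms by (intro powr_mono') auto
  then show ?thesis by (simp add: add_increasing2)
next
  case False
  then have "t powr x \<le> t powr b" using assms by (intro powr_mono) auto
  then show ?thesis by (simp add: add_increasing)
qed

lemma set_integral_nonneg:
  fixes f :: "'a \<Rightarrow> real"
  assumes "\<And>x. x \<in> A \<Longrightarrow> 0 \<le> f x"
  shows "0 \<le> (LINT x:A|M. f x)"
  unfolding set_lebesgue_integral_def using assms
  by (intro integral_nonneg_AE AE_I2) (auto simp: indicator_def)

lemma set_integral_Ioi_split:
  fixes f :: "real \<Rightarrow> real"
  assumes "set_integrable lborel {a<..} f" "a \<le> b"
  shows "(LINT t:{a<..}|lborel. f t) = (LINT t:{a<..b}|lborel. f t) + (LINT t:{b<..}|lborel. f t)"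
proof -
  have "{a<..} = {a<..b} \<union> {b<..}" using assms(2) by auto
  moreover have "set_integrable lborel {a<..b} f"
    by (rule set_integrable_subset[OF assms(1)]) auto
  moreover have "set_integrable lborel {b<..} f"
    by (rule set_integrable_subset[OF assms(1)]) (use assms(2) in auto)
  moreover have "{a<..b} \<inter> {b<..} = {}" by auto
  ultimately show ?thesis
    using set_integral_Un by metis
qed

lemma set_integral_nonneg_has_integral:
  fixes f :: "real \<Rightarrow> real"
  assumes "(f has_integral I) S" "S \<in> sets borel" "f \<in> borel_measurable borel"
    and "\<And>x. x \<in> S \<Longrightarrow> 0 \<le> f x"
  shows "set_integrable lborel S f" "(LINT x:S|lborel. f x) = I"
proof -
  let ?g = "\<lambda>x. indicator S x *\<^sub>R f x"
  have g_measurable: "?g \<in> borel_measurable borel" using assms(2,3) by measurable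
  have "?g = (\<lambda>x. if x \<in> S then f x else 0)"
    by (auto simp: indicator_def)
  then have "(?g has_integral I) UNIV"
    using assms(1) by (simp add: has_integral_restrict_UNIV)
  then have nn: "integral\<^sup>N lborel ?g = I"
    using assms(4) by (intro nn_integral_has_integral_lborel[OF g_measurable]) (auto simp: indicator_def)
  show "set_integrable lborel S f"
    unfolding set_integrable_def
    by (rule integrableI_nonneg) (use nn assms(4) g_measurable in \<open>auto simp: indicator_def intro!: AE_I2\<close>)
  show "(LINT x:S|lborel. f x) = I"
    unfolding set_lebesgue_integral_def using nn assms(4) g_measurable has_integral_nonneg[OF assms(1,4)]
    by (subst integral_eq_nn_integral) (auto simp: indicator_def intro!: AE_I2)
qed

lemma set_integral_powr_0_1:
  fixes x :: real
  assumes "x > 0"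
  shows "set_integrable lborel {0<..1} (\<lambda>t. t powr (x - 1))"
    and "(LINT t:{0<..1}|lborel. t powr (x - 1)) = 1 / x"
proof -
  have "((\<lambda>t. t powr (x - 1)) has_integral 1 / x) {0..1}"
    using has_integral_powr_from_0[of "x - 1" 1] assms by simp
  then have "((\<lambda>t. t powr (x - 1)) has_integral 1 / x) {0<..1}"
    by (rule has_integral_spike_set_eq[THEN iffD1, rotated -1])
      (auto intro: negligible_subset[of "{0}"])
  then show "set_integrable lborel {0<..1} (\<lambda>t. t powr (x - 1))"
    and "(LINT t:{0<..1}|lborel. t powr (x - 1)) = 1 / x"
    by (intro set_integral_nonneg_has_integral; simp)+
qed

lemma set_integral_powr_1_inf:
  fixes x :: real
  assumes "x < 0"
  shows "set_integrable lborel {1<..} (\<lambda>t. t powr (x - 1))"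
    and "(LINT t:{1<..}|lborel. t powr (x - 1)) = - 1 / x"
proof -
  have "((\<lambda>t. t powr (x - 1)) has_integral - 1 / x) {1..}"
    using has_integral_powr_to_inf[of "x - 1" 1] assms by simp
  then have "((\<lambda>t. t powr (x - 1)) has_integral - 1 / x) {1<..}"
    by (rule has_integral_spike_set_eq[THEN iffD1, rotated -1])
      (auto intro: negligible_subset[of "{1}"])
  then show "set_integrable lborel {1<..} (\<lambda>t. t powr (x - 1))"
    and "(LINT t:{1<..}|lborel. t powr (x - 1)) = - 1 / x"
    by (intro set_integral_nonneg_has_integral; simp)+
qed

lemma tendsto_one_plus_powr_inverse:
  fixes x :: "real \<Rightarrow> real"
  assumes x: "(x \<longlongrightarrow> c) (at 0)"
  shows "((\<lambda>\<alpha>. (1 + \<alpha> * x \<alpha>) powr (1 / \<alpha>)) \<longlongrightarrow> exp c) (at 0)"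
proof -
  define G where "G y = (if y = 0 then 1 else ln (1 + y) / y)" for y :: real
  have "(G \<longlongrightarrow> 1) (at 0)"
    using lim_ln_1_plus_x_over_x_at_0
    by (rule Lim_transform_eventually) (simp add: G_def eventually_at_filter)
  then have "isCont G 0"
    by (simp add: isCont_def G_def)
  moreover have small: "((\<lambda>\<alpha>. \<alpha> * x \<alpha>) \<longlongrightarrow> 0) (at 0)"
    using tendsto_mult[OF tendsto_ident_at x] by simp
  ultimately have "((\<lambda>\<alpha>. G (\<alpha> * x \<alpha>)) \<longlongrightarrow> G 0) (at 0)"
    by (rule isCont_tendsto_compose)
  then have "((\<lambda>\<alpha>. G (\<alpha> * x \<alpha>)) \<longlongrightarrow> 1) (at 0)"
    unfolding G_def[of 0] by simp
  then have lim: "((\<lambda>\<alpha>. exp (G (\<alpha> * x \<alpha>) * x \<alpha>)) \<longlongrightarrow> exp (1 * c)) (at 0)"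
    by (intro tendsto_exp tendsto_mult x)
  have "\<forall>\<^sub>F \<alpha> in at 0. -1 < \<alpha> * x \<alpha>"
    using small by (rule order_tendstoD) simp
  then have "\<forall>\<^sub>F \<alpha> in at 0. 1 + \<alpha> * x \<alpha> > 0"
    by eventually_elim linarith
  moreover have "\<forall>\<^sub>F \<alpha> in at 0. \<alpha> \<noteq> 0"
    by (simp add: eventually_at_filter)
  ultimately have "\<forall>\<^sub>F \<alpha> in at 0. exp (G (\<alpha> * x \<alpha>) * x \<alpha>) = (1 + \<alpha> * x \<alpha>) powr (1 / \<alpha>)"
    by eventually_elim (auto simp: G_def powr_def)
  with lim show ?thesis by (simp add: Lim_transform_eventually)
qed

lemma antimono_on_join:
  fixes f :: "real \<Rightarrow> real"
  assumes "isCont f c" "antimono_on {a<..<c} f" "antimono_on {c<..} f"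
  shows "antimono_on {a<..} f"
proof -
  have left: "f c \<le> f x" if "a < x" "x < c" for x
  proof (rule tendsto_upperbound)
    show "(f \<longlongrightarrow> f c) (at_left c)"
      using assms(1) unfolding isCont_def by (rule tendsto_within_subset) simp
    show "\<forall>\<^sub>F y in at_left c. f y \<le> f x"
      using eventually_at_left_real[OF \<open>x < c\<close>]
      by eventually_elim (use that assms(2) in \<open>auto simp: monotone_on_def\<close>)
  qed (simp add: trivial_limit_at_left_real)
  have right: "f x \<le> f c" if "c < x" for x
  proof (rule tendsto_lowerbound)
    show "(f \<longlongrightarrow> f c) (at_right c)"
      using assms(1) unfolding isCont_def by (rule tendsto_within_subset) simp
    show "\<forall>\<^sub>F y in at_right c. f x \<le> f y"
      using eventually_at_right_real[OF \<open>c < x\<close>]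
      by eventually_elim (use that assms(3) in \<open>auto simp: monotone_on_def\<close>)
  qed (simp add: trivial_limit_at_right_real)
  show ?thesis
  proof (rule monotone_onI)
    fix x y assume "x \<in> {a<..}" "y \<in> {a<..}" "x \<le> y"
    then consider "y < c" | "c < x" | "x \<le> c" "c \<le> y" by linarith
    then show "f y \<le> f x"
    proof cases
      case 1 then show ?thesis using assms(2) \<open>x \<in> _\<close> \<open>x \<le> y\<close> by (auto simp: monotone_on_def)
    next
      case 2 then show ?thesis using assms(3) \<open>x \<le> y\<close> by (auto simp: monotone_on_def)
    next
      case 3
      then have "f y \<le> f c" "f c \<le> f x"
        using left right \<open>x \<in> _\<close> by (cases "y = c"; cases "x = c"; auto)+
      then show ?thesis by linarith
    qed
  qed
qed

section \<open>Mellin transforms on \<open>(0, \<infinity>)\<close>\<close>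

definition mellin_integrable :: "(real \<Rightarrow> real) \<Rightarrow> real \<Rightarrow> bool" where
  "mellin_integrable f s \<longleftrightarrow> set_integrable lborel {0<..} (\<lambda>t. t powr (s - 1) * f t)"

definition mellin :: "(real \<Rightarrow> real) \<Rightarrow> real \<Rightarrow> real" where
  "mellin f s = (LINT t:{0<..}|lborel. t powr (s - 1) * f t)"

lemma mellin_cong:
  assumes "\<And>t. t > 0 \<Longrightarrow> f t = g t"
  shows "mellin_integrable f s \<longleftrightarrow> mellin_integrable g s" "mellin f s = mellin g s"
  unfolding mellin_integrable_def mellin_def using assms
  by (intro set_integrable_cong set_lebesgue_integral_cong; simp)+

lemma mellin_integrable_diff:
  "mellin_integrable f s \<Longrightarrow> mellin_integrable g s \<Longrightarrow> mellin_integrable (\<lambda>t. f t - g t) s"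
  unfolding mellin_integrable_def by (drule (1) set_integral_diff(1)) (simp add: algebra_simps)

lemma mellin_diff:
  "mellin_integrable f s \<Longrightarrow> mellin_integrable g s \<Longrightarrow> mellin (\<lambda>t. f t - g t) s = mellin f s - mellin g s"
  unfolding mellin_integrable_def mellin_def
  by (drule (1) set_integral_diff(2)) (simp add: algebra_simps)

lemma mellin_integrable_uminus: "mellin_integrable (\<lambda>t. - f t) s \<longleftrightarrow> mellin_integrable f s"
  unfolding mellin_integrable_def
  using set_integrable_mult_right[of "-1" lborel "{0<..}" "\<lambda>t. t powr (s - 1) * f t"]
    set_integrable_mult_right[of "-1" lborel "{0<..}" "\<lambda>t. t powr (s - 1) * - f t"]
  by auto

lemma mellin_uminus: "mellin (\<lambda>t. - f t) s = - mellin f s"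
  unfolding mellin_def using set_integral_mult_right[of lborel "{0<..}" "-1" "\<lambda>t. t powr (s - 1) * f t"]
  by simp

lemma mellin_integrable_bound:
  assumes "mellin_integrable g s" "f \<in> borel_measurable borel" "\<And>t. t > 0 \<Longrightarrow> \<bar>f t\<bar> \<le> g t"
  shows "mellin_integrable f s"
  unfolding mellin_integrable_def
proof (rule set_integrable_bound)
  show "set_integrable lborel {0<..} (\<lambda>t. t powr (s - 1) * g t)"
    using assms(1) by (simp add: mellin_integrable_def)
  show "set_borel_measurable lborel {0<..} (\<lambda>t. t powr (s - 1) * f t)"
    using assms(2) unfolding set_borel_measurable_def by measurable
  show "AE t in lborel. t \<in> {0<..} \<longrightarrow> norm (t powr (s - 1) * f t) \<le> norm (t powr (s - 1) * g t)"
    using assms(3) by (intro AE_I2) (auto simp: abs_mult intro!: mult_left_mono order.trans[OF _ abs_ge_self])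
qed

lemma mellin_integrable_add:
  "mellin_integrable f s \<Longrightarrow> mellin_integrable g s \<Longrightarrow> mellin_integrable (\<lambda>t. f t + g t) s"
  unfolding mellin_integrable_def by (drule (1) set_integral_add(1)) (simp add: algebra_simps)

lemma mellin_integrable_cmult:
  assumes "mellin_integrable f s"
  shows "mellin_integrable (\<lambda>t. c * f t) s"
proof -
  have "set_integrable lborel {0<..} (\<lambda>t. c * (t powr (s - 1) * f t))"
    using assms unfolding mellin_integrable_def by (rule set_integrable_mult_right)
  then show ?thesis
    unfolding mellin_integrable_def by (simp add: mult.left_commute)
qed

lemma mellin_scale:
  fixes l :: real
  assumes l: "l > 0"
  shows "mellin_integrable (\<lambda>t. f (l * t)) s \<longleftrightarrow> mellin_integrable f s"
    and "mellin (\<lambda>t. f (l * t)) s = l powr (- s) * mellin f s"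
proof -
  define g where "g u = indicator {0<..} u *\<^sub>R (u powr (s - 1) * f u)" for u
  have g_scaled: "g (0 + l * t) = l powr (s - 1) * (indicator {0<..} t *\<^sub>R (t powr (s - 1) * f (l * t)))" for t
    using l by (auto simp: g_def indicator_def zero_less_mult_iff powr_mult)
  show "mellin_integrable (\<lambda>t. f (l * t)) s \<longleftrightarrow> mellin_integrable f s"
    using lborel_integrable_real_affine_iff[of l g 0] l
    unfolding mellin_integrable_def set_integrable_def g_scaled g_def[symmetric]
    by (simp add: integrable_mult_left_iff)
  have "mellin f s = integral\<^sup>L lborel g"
    by (simp add: mellin_def set_lebesgue_integral_def g_def[abs_def])
  also have "\<dots> = l * integral\<^sup>L lborel (\<lambda>t. g (0 + l * t))"
    using lborel_integral_real_affine[of l g 0] l by simp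
  also have "\<dots> = l * (l powr (s - 1) * mellin (\<lambda>t. f (l * t)) s)"
    by (simp only: g_scaled integral_mult_right_zero) (simp add: mellin_def set_lebesgue_integral_def)
  finally show "mellin (\<lambda>t. f (l * t)) s = l powr (- s) * mellin f s"
    using l by (simp add: powr_minus powr_diff field_simps)
qed

lemma set_integrable_mellin_majorant:
  assumes "mellin_integrable f a" "mellin_integrable f b"
  shows "set_integrable lborel {0<..} (\<lambda>t. \<bar>t powr (a - 1) * f t\<bar> + \<bar>t powr (b - 1) * f t\<bar>)"
  using assms unfolding mellin_integrable_def by (intro set_integral_add set_integrable_abs)

lemma abs_powr_mult_le_endpoints:
  fixes t :: real
  assumes "t > 0" "a \<le> s" "s \<le> b"
  shows "\<bar>t powr (s - 1) * f t\<bar> \<le> \<bar>t powr (a - 1) * f t\<bar> + \<bar>t powr (b - 1) * f t\<bar>"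
proof -
  have "t powr (s - 1) \<le> t powr (a - 1) + t powr (b - 1)"
    using assms by (intro powr_le_powr_add_powr) auto
  then have "t powr (s - 1) * \<bar>f t\<bar> \<le> (t powr (a - 1) + t powr (b - 1)) * \<bar>f t\<bar>"
    by (rule mult_right_mono) simp
  then show ?thesis by (simp add: abs_mult algebra_simps)
qed

lemma mellin_integrable_between:
  assumes [measurable]: "f \<in> borel_measurable borel"
    and "mellin_integrable f a" "mellin_integrable f b" "a \<le> s" "s \<le> b"
  shows "mellin_integrable f s"
  unfolding mellin_integrable_def
proof (rule set_integrable_bound[OF set_integrable_mellin_majorant[OF assms(2,3)]])
  show "set_borel_measurable lborel {0<..} (\<lambda>t. t powr (s - 1) * f t)"
    unfolding set_borel_measurable_def by measurable
  show "AE t in lborel. t \<in> {0<..} \<longrightarrow> norm (t powr (s - 1) * f t) \<le>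
      norm (\<bar>t powr (a - 1) * f t\<bar> + \<bar>t powr (b - 1) * f t\<bar>)"
    using assms(4,5) abs_powr_mult_le_endpoints by (intro AE_I2) auto
qed

lemma continuous_on_mellin_Icc:
  assumes [measurable]: "f \<in> borel_measurable borel"
    and "mellin_integrable f a" "mellin_integrable f b"
  shows "continuous_on {a..b} (mellin f)"
proof (rule continuous_on_sequentiallyI)
  fix X :: "nat \<Rightarrow> real" and s
  assume X: "\<forall>n. X n \<in> {a..b}" "X \<longlonglongrightarrow> s" "s \<in> {a..b}"
  let ?w = "\<lambda>t. indicator {0<..} t *\<^sub>R (\<bar>t powr (a - 1) * f t\<bar> + \<bar>t powr (b - 1) * f t\<bar>)"
  show "(\<lambda>n. mellin f (X n)) \<longlonglongrightarrow> mellin f s"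
    unfolding mellin_def set_lebesgue_integral_def
  proof (rule integral_dominated_convergence)
    show "(\<lambda>t. indicator {0<..} t *\<^sub>R (t powr (s - 1) * f t)) \<in> borel_measurable lborel"
      by measurable
    show "(\<lambda>t. indicator {0<..} t *\<^sub>R (t powr (X n - 1) * f t)) \<in> borel_measurable lborel" for n
      by measurable
    show "integrable lborel ?w"
      using set_integrable_mellin_majorant[OF assms(2,3)] by (simp add: set_integrable_def)
    show "AE t in lborel. (\<lambda>n. indicator {0<..} t *\<^sub>R (t powr (X n - 1) * f t)) \<longlonglongrightarrow>
        indicator {0<..} t *\<^sub>R (t powr (s - 1) * f t)"
      using X(2) by (intro AE_I2) (auto simp: indicator_def intro!: tendsto_intros)
    show "AE t in lborel. norm (indicator {0<..} t *\<^sub>R (t powr (X n - 1) * f t)) \<le> ?w t" for n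
      using X(1) by (intro AE_I2) (auto simp: indicator_def intro!: abs_powr_mult_le_endpoints)
  qed
qed

lemma continuous_on_mellin:
  assumes [measurable]: "f \<in> borel_measurable borel"
    and "open S" "\<And>s. s \<in> S \<Longrightarrow> mellin_integrable f s"
  shows "continuous_on S (mellin f)"
proof (intro continuous_at_imp_continuous_on ballI)
  fix s assume "s \<in> S"
  then obtain e where e: "e > 0" "cball s e \<subseteq> S"
    using \<open>open S\<close> open_contains_cball by blast
  then have "continuous_on {s - e..s + e} (mellin f)"
    using e(2) by (intro continuous_on_mellin_Icc assms(1,3)) (auto simp: subset_iff dist_real_def)
  then have "continuous_on {s - e<..<s + e} (mellin f)"
    by (rule continuous_on_subset) auto
  then show "isCont (mellin f) s"
    using e by (intro continuous_on_interior[of "{s - e<..<s + e}"]) auto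
qed

lemma mellin_pos:
  assumes "mellin_integrable f s" "\<And>t. t > 0 \<Longrightarrow> f t \<ge> 0"
    and "0 \<le> p" "p < q" "\<And>t. p < t \<Longrightarrow> t \<le> q \<Longrightarrow> f t > 0"
  shows "mellin f s > 0"
proof -
  let ?g = "\<lambda>t. indicator {0<..} t *\<^sub>R (t powr (s - 1) * f t)"
  have g_nonneg: "AE t in lborel. 0 \<le> ?g t"
    using assms(2) by (intro AE_I2) (simp add: indicator_def)
  have "mellin f s \<noteq> 0"
  proof
    assume "mellin f s = 0"
    then have "AE t in lborel. ?g t = 0"
      using assms(1) g_nonneg unfolding mellin_def mellin_integrable_def set_integrable_def
        set_lebesgue_integral_def by (subst (asm) integral_nonneg_eq_0_iff_AE) auto
    then have "AE t in lborel. t \<notin> {p<..q}"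
      by (rule eventually_mono) (use assms(3-5) in \<open>fastforce simp: indicator_def\<close>)
    then have "{p<..q} \<in> null_sets lborel"
      by (subst AE_iff_null_sets) auto
    then have "emeasure lborel {p<..q} = 0"
      by auto
    then show False using \<open>p < q\<close> by simp
  qed
  moreover have "mellin f s \<ge> 0"
    using g_nonneg unfolding mellin_def set_lebesgue_integral_def by (rule integral_nonneg_AE)
  ultimately show ?thesis by simp
qed

lemma mellin_eq_0_of_nonneg:
  assumes "mellin_integrable f a" "mellin f a = 0" "\<And>t. t > 0 \<Longrightarrow> f t \<ge> 0"
  shows "mellin f b = 0"
proof -
  have "AE t in lborel. indicator {0<..} t *\<^sub>R (t powr (a - 1) * f t) = 0"
    using assms unfolding mellin_def mellin_integrable_def set_integrable_def set_lebesgue_integral_def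
    by (subst (asm) integral_nonneg_eq_0_iff_AE) (auto simp: indicator_def intro!: AE_I2)
  then have "AE t in lborel. indicator {0<..} t *\<^sub>R (t powr (b - 1) * f t) = 0"
    by (rule eventually_mono) (auto simp: indicator_def split: if_splits)
  then show ?thesis
    unfolding mellin_def set_lebesgue_integral_def by (rule integral_eq_zero_AE)
qed

lemma powr_weight_le_of_sign:
  fixes t s\<^sub>0 y :: real
  assumes "t > 0" "s\<^sub>0 \<ge> 0" "a < b" "y > 0 \<Longrightarrow> t \<le> s\<^sub>0" "y < 0 \<Longrightarrow> s\<^sub>0 \<le> t"
  shows "t powr (b - 1) * y \<le> s\<^sub>0 powr (b - a) * (t powr (a - 1) * y)"
proof -
  have split: "t powr (b - 1) * y - s\<^sub>0 powr (b - a) * (t powr (a - 1) * y)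
      = (t powr (a - 1) * y) * (t powr (b - a) - s\<^sub>0 powr (b - a))"
    using assms(1) by (simp add: algebra_simps flip: powr_add)
  consider "y > 0" | "y < 0" | "y = 0" by linarith
  then have "(t powr (a - 1) * y) * (t powr (b - a) - s\<^sub>0 powr (b - a)) \<le> 0"
  proof cases
    case 1
    then have "t powr (b - a) \<le> s\<^sub>0 powr (b - a)" using assms by (intro powr_mono2) auto
    then show ?thesis using 1 by (intro mult_nonneg_nonpos) auto
  next
    case 2
    then have "s\<^sub>0 powr (b - a) \<le> t powr (b - a)" using assms by (intro powr_mono2) auto
    moreover have "t powr (a - 1) * y \<le> 0" using 2 by (simp add: mult_nonneg_nonpos)
    ultimately show ?thesis by (simp add: mult_nonpos_nonneg)
  qed simp
  then show ?thesis using split by linarith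
qed

text \<open>With \<open>s\<^sub>0\<close> the infimum of the points where \<open>f\<close> is negative, the weight
  \<open>t powr (b - a)\<close> is at most \<open>s\<^sub>0 powr (b - a)\<close> where \<open>f\<close> is positive and at least that
  where \<open>f\<close> is negative.\<close>
lemma mellin_nonpos_of_sign_change:
  assumes fa: "mellin_integrable f a" and fb: "mellin_integrable f b" and "a < b"
    and zero: "mellin f a = 0"
    and sign_change: "\<And>t s. 0 < t \<Longrightarrow> 0 < s \<Longrightarrow> f t > 0 \<Longrightarrow> f s < 0 \<Longrightarrow> t < s"
  shows "mellin f b \<le> 0"
proof (cases "\<forall>t>0. f t \<ge> 0")
  case True
  then show ?thesis using mellin_eq_0_of_nonneg[OF fa zero] by simp
next
  case False
  define T where "T = {t. 0 < t \<and> f t < 0}"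
  define s\<^sub>0 where "s\<^sub>0 = Inf T"
  have "T \<noteq> {}" using False by (auto simp: T_def not_le)
  have "bdd_below T" unfolding T_def by (rule bdd_belowI[of _ 0]) auto
  have pointwise: "t powr (b - 1) * f t \<le> s\<^sub>0 powr (b - a) * (t powr (a - 1) * f t)" if "t > 0" for t
  proof (rule powr_weight_le_of_sign[OF that _ \<open>a < b\<close>])
    show "s\<^sub>0 \<ge> 0" unfolding s\<^sub>0_def using \<open>T \<noteq> {}\<close> by (intro cInf_greatest) (auto simp: T_def)
    show "t \<le> s\<^sub>0" if "f t > 0"
      unfolding s\<^sub>0_def using \<open>T \<noteq> {}\<close> sign_change[OF \<open>t > 0\<close> _ that]
      by (intro cInf_greatest) (auto simp: T_def less_imp_le)
    show "s\<^sub>0 \<le> t" if "f t < 0"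
      unfolding s\<^sub>0_def using \<open>bdd_below T\<close> \<open>t > 0\<close> that by (intro cInf_lower) (auto simp: T_def)
  qed
  have "mellin f b \<le> (LINT t:{0<..}|lborel. s\<^sub>0 powr (b - a) * (t powr (a - 1) * f t))"
    using fa fb pointwise unfolding mellin_def mellin_integrable_def
    by (intro set_integral_mono) (auto intro: set_integrable_mult_right)
  also have "\<dots> = s\<^sub>0 powr (b - a) * mellin f a"
    unfolding mellin_def by (rule set_integral_mult_right)
  finally show ?thesis using zero by simp
qed

section \<open>The function \<open>zeta\<close>\<close>

lemma zeta_cong:
  assumes "\<And>t. t \<ge> 0 \<Longrightarrow> \<omega>' t = \<omega> t" "\<And>t. t > 0 \<Longrightarrow> \<omega>' (\<phi>' t) = \<omega> (\<phi> t)"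
  shows "zeta \<omega>' \<phi>' = zeta \<omega> \<phi>"
  unfolding zeta_def using assms
  by (intro ext if_cong refl arg_cong2[where f = "(powr)"] arg_cong2[where f = "(/)"]
      arg_cong[where f = exp] set_lebesgue_integral_cong) auto

locale zeta_setting =
  fixes \<omega> \<phi> :: "real \<Rightarrow> real"
  assumes \<omega>_nonneg: "\<And>t. t \<ge> 0 \<Longrightarrow> \<omega> t \<ge> 0"
    and \<omega>_decr: "antimono_on {0..} \<omega>"
    and \<omega>_int_pos: "\<And>\<alpha>. \<alpha> > 0 \<Longrightarrow>
          set_integrable lborel {0<..} (\<lambda>t. t powr (\<alpha> - 1) * \<omega> t) \<and>
          0 < (LINT t:{0<..}|lborel. t powr (\<alpha> - 1) * \<omega> t)"
    and \<omega>_int_neg: "\<And>\<alpha>. -1 < \<alpha> \<Longrightarrow> \<alpha> < 0 \<Longrightarrow>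
          set_integrable lborel {0<..} (\<lambda>t. t powr (\<alpha> - 1) * (\<omega> 0 - \<omega> t)) \<and>
          0 < (LINT t:{0<..}|lborel. t powr (\<alpha> - 1) * (\<omega> 0 - \<omega> t))"
    and \<phi>_nonneg: "\<And>t. t \<ge> 0 \<Longrightarrow> \<phi> t \<ge> 0"
    and \<phi>_nonzero: "\<exists>t\<ge>0. \<phi> t \<noteq> 0"
    and \<phi>_0: "\<phi> 0 = 0"
    and \<phi>_incr: "mono_on {0<..} \<phi>"
    and \<phi>_quot_incr: "mono_on {0<..} (\<lambda>t. \<phi> t / t)"
begin

text \<open>Monotone extensions of \<open>\<omega>\<close> and \<open>\<phi>\<close> to the whole real line: they do not change
  \<open>zeta\<close>, and global monotonicity makes them Borel measurable.\<close>
definition W :: "real \<Rightarrow> real" where "W t = \<omega> (max 0 t)"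
definition P :: "real \<Rightarrow> real" where "P t = (if t > 0 then \<phi> t else 0)"

lemma W_antimono: "x \<le> y \<Longrightarrow> W y \<le> W x"
  using \<omega>_decr unfolding W_def by (auto simp: monotone_on_def)

lemma W_nonneg: "W t \<ge> 0"
  by (simp add: W_def \<omega>_nonneg)

lemma P_mono: "x \<le> y \<Longrightarrow> P x \<le> P y"
  using \<phi>_incr \<phi>_nonneg by (auto simp: P_def monotone_on_def)

lemma P_nonneg: "P t \<ge> 0"
  by (simp add: P_def \<phi>_nonneg)

lemma P_div_mono: "0 < s \<Longrightarrow> s \<le> t \<Longrightarrow> P s / s \<le> P t / t"
  using \<phi>_quot_incr by (auto simp: P_def monotone_on_def)

lemma W_measurable [measurable]: "W \<in> borel_measurable borel"
proof -
  have "mono (\<lambda>t. - W t)" by (rule monoI) (simp add: W_antimono)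
  then have "(\<lambda>t. - (- W t)) \<in> borel_measurable borel"
    by (intro borel_measurable_uminus borel_measurable_mono)
  then show ?thesis by simp
qed

lemma P_measurable [measurable]: "P \<in> borel_measurable borel"
  by (intro borel_measurable_mono monoI P_mono)

lemma zeta_eq: "zeta \<omega> \<phi> = zeta W P"
  by (rule zeta_cong[symmetric]) (auto simp: W_def P_def \<phi>_nonneg)

lemma W_int_pos: "\<alpha> > 0 \<Longrightarrow> mellin_integrable W \<alpha> \<and> 0 < mellin W \<alpha>"
  using \<omega>_int_pos[of \<alpha>] mellin_cong[of W \<omega>]
  by (simp add: W_def mellin_integrable_def mellin_def)

lemma W_int_neg:
  "-1 < \<alpha> \<Longrightarrow> \<alpha> < 0 \<Longrightarrow> mellin_integrable (\<lambda>t. W 0 - W t) \<alpha> \<and> 0 < mellin (\<lambda>t. W 0 - W t) \<alpha>"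
  using \<omega>_int_neg[of \<alpha>] mellin_cong[of "\<lambda>t. W 0 - W t" "\<lambda>t. \<omega> 0 - \<omega> t"]
  by (simp add: W_def mellin_integrable_def mellin_def)

lemma W_pos_somewhere: "\<exists>e>0. W e > 0"
proof (rule ccontr)
  assume "\<not> ?thesis"
  then have "mellin W 1 = mellin (\<lambda>_. 0) 1"
    using W_nonneg by (intro mellin_cong) (simp add: order.antisym leI)
  then show False using W_int_pos[of 1] by (simp add: mellin_def)
qed

lemma W_drops: "\<exists>T>0. W T < W 0"
proof (rule ccontr)
  assume "\<not> ?thesis"
  then have "mellin (\<lambda>t. W 0 - W t) (-1/2) = mellin (\<lambda>_. 0) (-1/2)"
    using W_antimono[of 0] by (intro mellin_cong) (simp add: order.antisym leI)
  then show False using W_int_neg[of "-1/2"] by (simp add: mellin_def)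
qed

lemma W0_pos: "W 0 > 0"
  using W_pos_somewhere W_antimono[of 0] by (meson less_le_trans less_imp_le)

definition pivot :: real where "pivot = (SOME t. t > 0 \<and> P t > 0)"
definition slope :: real where "slope = P pivot / pivot"

lemma pivot_pos: "pivot > 0" "P pivot > 0"
proof -
  obtain t where "t \<ge> 0" "\<phi> t \<noteq> 0" using \<phi>_nonzero by blast
  then have "t > 0 \<and> P t > 0" using \<phi>_0 \<phi>_nonneg[of t] by (cases "t = 0") (auto simp: P_def)
  then have "pivot > 0 \<and> P pivot > 0" unfolding pivot_def by (rule someI)
  then show "pivot > 0" "P pivot > 0" by auto
qed

lemma slope_pos: "slope > 0"
  using pivot_pos by (simp add: slope_def)

lemma P_ge_slope: "pivot \<le> t \<Longrightarrow> slope * t \<le> P t"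
  using P_div_mono[of pivot t] pivot_pos by (simp add: slope_def field_simps)

lemma P_le_slope: "0 < t \<Longrightarrow> t \<le> pivot \<Longrightarrow> P t \<le> slope * t"
  using P_div_mono[of t pivot] pivot_pos by (simp add: slope_def field_simps)

definition shift :: "real \<Rightarrow> real" where "shift \<alpha> = (if \<alpha> > 0 then 0 else W 0)"
definition admissible :: "real \<Rightarrow> bool" where "admissible \<alpha> \<longleftrightarrow> \<alpha> > 0 \<or> (-1 < \<alpha> \<and> \<alpha> < 0)"
definition numer :: "real \<Rightarrow> real" where "numer \<alpha> = mellin (\<lambda>t. W (P t) - shift \<alpha>) \<alpha>"
definition denom :: "real \<Rightarrow> real" where "denom \<alpha> = mellin (\<lambda>t. W t - shift \<alpha>) \<alpha>"
definition defect :: "real \<Rightarrow> real" where "defect \<alpha> = mellin (\<lambda>t. W (P t) - W t) \<alpha>"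

lemma zeta_admissible: "admissible \<alpha> \<Longrightarrow> zeta \<omega> \<phi> \<alpha> = (numer \<alpha> / denom \<alpha>) powr (1 / \<alpha>)"
  unfolding zeta_eq zeta_def numer_def denom_def mellin_def shift_def admissible_def by auto

lemma zeta_zero: "zeta \<omega> \<phi> 0 = exp (defect 0 / W 0)"
proof -
  have "(LINT t:{0<..}|lborel. (W (P t) - W t) / (t * W 0))
      = (LINT t:{0<..}|lborel. t powr (0 - 1) * (W (P t) - W t) / W 0)"
    by (rule set_lebesgue_integral_cong) (auto simp: powr_neg_one)
  also have "\<dots> = defect 0 / W 0"
    unfolding defect_def mellin_def by (rule set_integral_divide_zero)
  finally show ?thesis unfolding zeta_eq zeta_def by simp
qed

lemma denom_integrable: "admissible \<alpha> \<Longrightarrow> mellin_integrable (\<lambda>t. W t - shift \<alpha>) \<alpha>"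
  using W_int_pos[of \<alpha>] W_int_neg[of \<alpha>] mellin_integrable_uminus[of "\<lambda>t. W 0 - W t" \<alpha>]
  by (auto simp: admissible_def shift_def)

lemma denom_pos: "\<alpha> > 0 \<Longrightarrow> denom \<alpha> > 0"
  using W_int_pos[of \<alpha>] by (simp add: denom_def shift_def)

lemma denom_neg: "-1 < \<alpha> \<Longrightarrow> \<alpha> < 0 \<Longrightarrow> denom \<alpha> < 0"
  using W_int_neg[of \<alpha>] mellin_uminus[of "\<lambda>t. W 0 - W t" \<alpha>] by (simp add: denom_def shift_def)

text \<open>Majorants of \<open>W \<circ> P\<close> and \<open>W 0 - W \<circ> P\<close> by dilates of \<open>W\<close> resp. \<open>W 0 - W\<close>: below
  resp. above \<open>pivot\<close> the slope bound on \<open>P\<close> fails, and the second dilate takes over.\<close>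
lemma W_comp_P_le:
  assumes "e > 0" "W e > 0" "t > 0"
  shows "W (P t) \<le> W (slope * t) + W 0 / W e * W (e / pivot * t)"
proof (cases "t \<ge> pivot")
  case True
  then have "W (P t) \<le> W (slope * t)" using P_ge_slope W_antimono by blast
  then show ?thesis using W_nonneg assms(2) by (simp add: add_increasing2)
next
  case False
  then have "e / pivot * t \<le> e" using pivot_pos assms by (simp add: field_simps)
  then have "W 0 / W e * W e \<le> W 0 / W e * W (e / pivot * t)"
    using W_antimono W_nonneg assms(2) by (intro mult_left_mono) auto
  moreover have "W 0 / W e * W e = W 0" using assms(2) by simp
  ultimately have "W (P t) \<le> W 0 / W e * W (e / pivot * t)"
    using W_antimono[OF P_nonneg, of t] by linarith
  then show ?thesis using W_nonneg by (simp add: add_increasing)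
qed

lemma W0_minus_W_comp_P_le:
  assumes "T > 0" "W T < W 0" "t > 0"
  shows "W 0 - W (P t) \<le> (W 0 - W (slope * t)) + W 0 / (W 0 - W T) * (W 0 - W (T / pivot * t))"
proof (cases "t \<le> pivot")
  case True
  then have "W 0 - W (P t) \<le> W 0 - W (slope * t)" using P_le_slope W_antimono assms(3) by simp
  moreover have "0 \<le> W 0 / (W 0 - W T) * (W 0 - W (T / pivot * t))"
    using W_antimono[of 0 "T / pivot * t"] W_nonneg[of 0] pivot_pos assms by simp
  ultimately show ?thesis by linarith
next
  case False
  then have "T \<le> T / pivot * t" using pivot_pos assms by (simp add: field_simps)
  then have "W 0 / (W 0 - W T) * (W 0 - W T) \<le> W 0 / (W 0 - W T) * (W 0 - W (T / pivot * t))"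
    using W_antimono W_nonneg assms(2) by (intro mult_left_mono) auto
  then have "W 0 - W (P t) \<le> W 0 / (W 0 - W T) * (W 0 - W (T / pivot * t))"
    using W_nonneg[of "P t"] assms(2) by simp
  moreover have "W (slope * t) \<le> W 0" using W_antimono slope_pos assms(3) by simp
  ultimately show ?thesis by linarith
qed

lemma numer_integrable: "admissible \<alpha> \<Longrightarrow> mellin_integrable (\<lambda>t. W (P t) - shift \<alpha>) \<alpha>"
proof (cases "\<alpha> > 0")
  case True
  obtain e where e: "e > 0" "W e > 0" using W_pos_somewhere by blast
  have "e / pivot > 0" using e pivot_pos by simp
  then have "mellin_integrable (\<lambda>t. W (slope * t) + W 0 / W e * W (e / pivot * t)) \<alpha>"
    using W_int_pos[OF True] mellin_scale(1)[OF slope_pos, of W] mellin_scale(1)[of "e / pivot" W]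
    by (intro mellin_integrable_add mellin_integrable_cmult) auto
  then have "mellin_integrable (\<lambda>t. W (P t)) \<alpha>"
    by (rule mellin_integrable_bound) (use W_nonneg W_comp_P_le[OF e] in auto)
  then show ?thesis using True by (simp add: shift_def)
next
  case False
  assume "admissible \<alpha>"
  then have \<alpha>: "-1 < \<alpha>" "\<alpha> < 0" using False by (auto simp: admissible_def)
  obtain T where T: "T > 0" "W T < W 0" using W_drops by blast
  have "T / pivot > 0" using T pivot_pos by simp
  then have "mellin_integrable
      (\<lambda>t. (W 0 - W (slope * t)) + W 0 / (W 0 - W T) * (W 0 - W (T / pivot * t))) \<alpha>"
    using W_int_neg[OF \<alpha>] mellin_scale(1)[OF slope_pos, of "\<lambda>t. W 0 - W t"]
      mellin_scale(1)[of "T / pivot" "\<lambda>t. W 0 - W t"]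
    by (intro mellin_integrable_add mellin_integrable_cmult) auto
  then have "mellin_integrable (\<lambda>t. W 0 - W (P t)) \<alpha>"
    by (rule mellin_integrable_bound) (use W_antimono[OF P_nonneg] W0_minus_W_comp_P_le[OF T] in auto)
  then show ?thesis
    using False mellin_integrable_uminus[of "\<lambda>t. W 0 - W (P t)"] by (simp add: shift_def)
qed

lemma numer_pos: "\<alpha> > 0 \<Longrightarrow> numer \<alpha> > 0"
proof -
  assume "\<alpha> > 0"
  obtain e where e: "e > 0" "W e > 0" using W_pos_somewhere by blast
  have "mellin (\<lambda>t. W (P t) - shift \<alpha>) \<alpha> > 0"
  proof (rule mellin_pos)
    show "mellin_integrable (\<lambda>t. W (P t) - shift \<alpha>) \<alpha>"
      using \<open>\<alpha> > 0\<close> by (intro numer_integrable) (simp add: admissible_def)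
    show "0 < min pivot (e / slope)" using pivot_pos e slope_pos by simp
    fix t assume "0 < t" "t \<le> min pivot (e / slope)"
    then have "P t \<le> e"
      using P_le_slope[of t] slope_pos by (simp add: field_simps)
    then show "W (P t) - shift \<alpha> > 0"
      using W_antimono[of "P t" e] e \<open>\<alpha> > 0\<close> by (simp add: shift_def)
  qed (use W_nonneg \<open>\<alpha> > 0\<close> in \<open>simp_all add: shift_def\<close>)
  then show ?thesis by (simp add: numer_def)
qed

lemma numer_neg: "-1 < \<alpha> \<Longrightarrow> \<alpha> < 0 \<Longrightarrow> numer \<alpha> < 0"
proof -
  assume \<alpha>: "-1 < \<alpha>" "\<alpha> < 0"
  obtain T where T: "T > 0" "W T < W 0" using W_drops by blast
  define q where "q = max pivot (T / slope)"
  have "mellin (\<lambda>t. - (W (P t) - shift \<alpha>)) \<alpha> > 0"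
  proof (rule mellin_pos)
    show "mellin_integrable (\<lambda>t. - (W (P t) - shift \<alpha>)) \<alpha>"
      using \<alpha> numer_integrable[of \<alpha>] mellin_integrable_uminus[of "\<lambda>t. W (P t) - shift \<alpha>" \<alpha>]
      by (simp add: admissible_def)
    show "0 \<le> q" "q < q + 1" using pivot_pos by (simp_all add: q_def)
    fix t assume "q < t" "t \<le> q + 1"
    then have "T < slope * t" "pivot \<le> t"
      using slope_pos by (auto simp: q_def field_simps)
    then have "W (P t) \<le> W T" using P_ge_slope W_antimono by fastforce
    then show "- (W (P t) - shift \<alpha>) > 0" using T \<alpha> by (simp add: shift_def)
  qed (use \<alpha> W_antimono[OF P_nonneg] in \<open>simp add: shift_def\<close>)
  then show ?thesis
    using mellin_uminus[of "\<lambda>t. W (P t) - shift \<alpha>" \<alpha>] by (simp add: numer_def)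
qed

lemma ratio_pos: "admissible \<alpha> \<Longrightarrow> numer \<alpha> / denom \<alpha> > 0"
  unfolding admissible_def using numer_pos numer_neg denom_pos denom_neg
  by (auto intro: divide_pos_pos divide_neg_neg)

lemma defect_eq: "admissible \<alpha> \<Longrightarrow> defect \<alpha> = numer \<alpha> - denom \<alpha>"
  unfolding defect_def numer_def denom_def
  by (simp add: mellin_diff[symmetric] numer_integrable denom_integrable)

lemma defect_integrable: "\<alpha> > -1 \<Longrightarrow> mellin_integrable (\<lambda>t. W (P t) - W t) \<alpha>"
proof -
  have admissible_case: "mellin_integrable (\<lambda>t. W (P t) - W t) \<beta>" if "admissible \<beta>" for \<beta>
    using mellin_integrable_diff[OF numer_integrable[OF that] denom_integrable[OF that]] by simp
  assume "\<alpha> > -1"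
  show ?thesis
  proof (cases "\<alpha> = 0")
    case True
    show ?thesis
      by (rule mellin_integrable_between[of _ "-1/2" "1/2"])
        (use True admissible_case in \<open>auto simp: admissible_def\<close>)
  next
    case False
    then show ?thesis using \<open>\<alpha> > -1\<close> by (intro admissible_case) (auto simp: admissible_def)
  qed
qed

lemma continuous_on_defect: "continuous_on {-1<..} defect"
  unfolding defect_def[abs_def] by (intro continuous_on_mellin defect_integrable) auto

lemma continuous_on_zeta_branch:
  assumes "open S" and branch: "\<And>\<alpha>. \<alpha> \<in> S \<Longrightarrow> admissible \<alpha> \<and> shift \<alpha> = C"
  shows "continuous_on S (zeta \<omega> \<phi>)"
proof -
  let ?N = "mellin (\<lambda>t. W (P t) - C)" and ?D = "mellin (\<lambda>t. W t - C)"
  have "(\<lambda>t. W (P t) - C) \<in> borel_measurable borel" by measurable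
  moreover have "(\<lambda>t. W t - C) \<in> borel_measurable borel" by measurable
  ultimately have "continuous_on S ?N" "continuous_on S ?D"
    using assms numer_integrable denom_integrable by (auto intro!: continuous_on_mellin)
  moreover have ratio: "?N \<alpha> / ?D \<alpha> > 0" "\<alpha> \<noteq> 0"
    and zeta_eq_ratio: "zeta \<omega> \<phi> \<alpha> = (?N \<alpha> / ?D \<alpha>) powr (1 / \<alpha>)" if "\<alpha> \<in> S" for \<alpha>
  proof -
    have "admissible \<alpha>" "numer \<alpha> = ?N \<alpha>" "denom \<alpha> = ?D \<alpha>"
      using branch[OF that] by (simp_all add: numer_def denom_def)
    then show "?N \<alpha> / ?D \<alpha> > 0" "\<alpha> \<noteq> 0" "zeta \<omega> \<phi> \<alpha> = (?N \<alpha> / ?D \<alpha>) powr (1 / \<alpha>)"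
      using ratio_pos[of \<alpha>] zeta_admissible[of \<alpha>] by (auto simp: admissible_def)
  qed
  moreover have "\<forall>\<alpha>\<in>S. ?D \<alpha> \<noteq> 0"
    using ratio(1) by fastforce
  moreover have "\<forall>\<alpha>\<in>S. ?N \<alpha> / ?D \<alpha> \<noteq> 0" "\<forall>\<alpha>\<in>S. \<alpha> \<noteq> 0"
    using ratio by fastforce+
  ultimately have "continuous_on S (\<lambda>\<alpha>. (?N \<alpha> / ?D \<alpha>) powr (1 / \<alpha>))"
    by (intro continuous_on_powr continuous_on_divide continuous_on_const continuous_on_id)
  then show ?thesis
    by (subst continuous_on_cong[OF refl zeta_eq_ratio])
qed

definition head :: "real \<Rightarrow> real" where
  "head \<alpha> = (LINT t:{0<..1}|lborel. t powr (\<alpha> - 1) * (W 0 - W t))"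
definition tail :: "real \<Rightarrow> real" where
  "tail \<alpha> = (LINT t:{1<..}|lborel. t powr (\<alpha> - 1) * W t)"

lemma head_integrable: "-1/2 \<le> \<alpha> \<Longrightarrow> set_integrable lborel {0<..1} (\<lambda>t. t powr (\<alpha> - 1) * (W 0 - W t))"
proof (rule set_integrable_bound)
  show "set_integrable lborel {0<..1} (\<lambda>t. t powr (-1/2 - 1) * (W 0 - W t))"
    using W_int_neg[of "-1/2"] by (auto simp: mellin_integrable_def intro: set_integrable_subset)
  show "set_borel_measurable lborel {0<..1} (\<lambda>t. t powr (\<alpha> - 1) * (W 0 - W t))"
    unfolding set_borel_measurable_def by measurable
  assume "-1/2 \<le> \<alpha>"
  then show "AE t in lborel. t \<in> {0<..1} \<longrightarrow>
      norm (t powr (\<alpha> - 1) * (W 0 - W t)) \<le> norm (t powr (-1/2 - 1) * (W 0 - W t))"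
    using W_antimono[of 0] by (intro AE_I2) (auto simp: abs_mult intro!: mult_right_mono powr_mono')
qed

lemma tail_integrable: "\<alpha> \<le> 1/2 \<Longrightarrow> set_integrable lborel {1<..} (\<lambda>t. t powr (\<alpha> - 1) * W t)"
proof (rule set_integrable_bound)
  show "set_integrable lborel {1<..} (\<lambda>t. t powr (1/2 - 1) * W t)"
    using W_int_pos[of "1/2"] by (auto simp: mellin_integrable_def intro: set_integrable_subset)
  show "set_borel_measurable lborel {1<..} (\<lambda>t. t powr (\<alpha> - 1) * W t)"
    unfolding set_borel_measurable_def by measurable
  assume "\<alpha> \<le> 1/2"
  then show "AE t in lborel. t \<in> {1<..} \<longrightarrow>
      norm (t powr (\<alpha> - 1) * W t) \<le> norm (t powr (1/2 - 1) * W t)"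
    using W_nonneg by (intro AE_I2) (auto simp: abs_mult intro!: mult_right_mono powr_mono)
qed

lemma head_bounds: "-1/2 \<le> \<alpha> \<Longrightarrow> 0 \<le> head \<alpha> \<and> head \<alpha> \<le> head (-1/2)"
  unfolding head_def using head_integrable[of \<alpha>] head_integrable[of "-1/2"] W_antimono[of 0]
  by (auto intro!: set_integral_nonneg set_integral_mono mult_right_mono powr_mono')

lemma tail_bounds: "\<alpha> \<le> 1/2 \<Longrightarrow> 0 \<le> tail \<alpha> \<and> tail \<alpha> \<le> tail (1/2)"
  unfolding tail_def using tail_integrable[of \<alpha>] tail_integrable[of "1/2"] W_nonneg
  by (auto intro!: set_integral_nonneg set_integral_mono mult_right_mono powr_mono)

text \<open>Near \<open>\<alpha> = 0\<close> the denominator blows up like \<open>W 0 / \<alpha>\<close>: the constant \<open>W 0\<close> on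
  \<open>(0, 1]\<close> (for \<open>\<alpha> > 0\<close>) resp. on \<open>(1, \<infinity>)\<close> (for \<open>\<alpha> < 0\<close>) contributes exactly this.\<close>
lemma denom_split:
  assumes "admissible \<alpha>" "-1/2 \<le> \<alpha>" "\<alpha> \<le> 1/2"
  shows "denom \<alpha> = W 0 / \<alpha> + tail \<alpha> - head \<alpha>"
proof (cases "\<alpha> > 0")
  case True
  have "denom \<alpha> = (LINT t:{0<..1}|lborel. t powr (\<alpha> - 1) * W t) + tail \<alpha>"
    using W_int_pos[OF True] True
    by (simp add: denom_def mellin_def shift_def tail_def mellin_integrable_def set_integral_Ioi_split)
  also have "(LINT t:{0<..1}|lborel. t powr (\<alpha> - 1) * W t)
      = (LINT t:{0<..1}|lborel. W 0 * t powr (\<alpha> - 1) - t powr (\<alpha> - 1) * (W 0 - W t))"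
    by (rule set_lebesgue_integral_cong) (auto simp: algebra_simps)
  also have "\<dots> = W 0 / \<alpha> - head \<alpha>"
    using set_integral_powr_0_1[OF True] head_integrable assms(2)
    by (simp add: head_def set_integral_diff set_integrable_mult_right)
  finally show ?thesis by simp
next
  case False
  then have \<alpha>: "-1 < \<alpha>" "\<alpha> < 0" using assms(1) by (auto simp: admissible_def)
  have "denom \<alpha> = (LINT t:{0<..1}|lborel. t powr (\<alpha> - 1) * (W t - W 0))
      + (LINT t:{1<..}|lborel. t powr (\<alpha> - 1) * (W t - W 0))"
    using denom_integrable[OF assms(1)] False
    by (simp add: denom_def mellin_def shift_def mellin_integrable_def set_integral_Ioi_split)
  also have "(LINT t:{0<..1}|lborel. t powr (\<alpha> - 1) * (W t - W 0))
      = (LINT t:{0<..1}|lborel. - (t powr (\<alpha> - 1) * (W 0 - W t)))"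
    by (rule set_lebesgue_integral_cong) (auto simp: algebra_simps)
  also have "\<dots> = - head \<alpha>"
    unfolding head_def using head_integrable assms(2) by (simp add: set_integral_uminus)
  also have "(LINT t:{1<..}|lborel. t powr (\<alpha> - 1) * (W t - W 0))
      = (LINT t:{1<..}|lborel. t powr (\<alpha> - 1) * W t - W 0 * t powr (\<alpha> - 1))"
    by (rule set_lebesgue_integral_cong) (auto simp: algebra_simps)
  also have "\<dots> = tail \<alpha> + W 0 / \<alpha>"
    using set_integral_powr_1_inf[OF \<alpha>(2)] tail_integrable assms(3)
    by (simp add: tail_def set_integral_diff set_integrable_mult_right)
  finally show ?thesis by simp
qed

lemma tendsto_alpha_denom: "((\<lambda>\<alpha>. \<alpha> * denom \<alpha>) \<longlongrightarrow> W 0) (at 0)"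
proof -
  have "((\<lambda>\<alpha>. \<alpha> * denom \<alpha> - W 0) \<longlongrightarrow> 0) (at 0)"
  proof (rule Lim_null_comparison)
    have "\<forall>\<^sub>F \<alpha> in at 0. \<alpha> \<in> {-1/2<..<1/2::real} - {0}"
      by (rule eventually_at_in_open) auto
    then show "\<forall>\<^sub>F \<alpha> in at 0. norm (\<alpha> * denom \<alpha> - W 0) \<le> \<bar>\<alpha>\<bar> * (tail (1/2) + head (-1/2))"
    proof eventually_elim
      case (elim \<alpha>)
      then have "admissible \<alpha>" by (auto simp: admissible_def)
      then have "\<alpha> * denom \<alpha> - W 0 = \<alpha> * (tail \<alpha> - head \<alpha>)"
        using elim denom_split[of \<alpha>] by (simp add: field_simps)
      moreover have "\<bar>tail \<alpha> - head \<alpha>\<bar> \<le> tail (1/2) + head (-1/2)"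
        using elim tail_bounds[of \<alpha>] head_bounds[of \<alpha>] by auto
      ultimately show ?case by (simp add: abs_mult mult_left_mono)
    qed
    show "((\<lambda>\<alpha>. \<bar>\<alpha>\<bar> * (tail (1/2) + head (-1/2))) \<longlongrightarrow> 0) (at 0)"
      by (auto intro!: tendsto_eq_intros)
  qed
  then show ?thesis by (simp add: LIM_zero_iff)
qed

lemma isCont_zeta_0: "isCont (zeta \<omega> \<phi>) 0"
proof -
  define x where "x \<alpha> = defect \<alpha> / (\<alpha> * denom \<alpha>)" for \<alpha>
  have "(defect \<longlongrightarrow> defect 0) (at 0)"
    using continuous_on_defect
    by (intro continuous_on_interior[THEN isContD, of "{-1<..}"]) (auto simp: interior_open)
  then have "(x \<longlongrightarrow> defect 0 / W 0) (at 0)"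
    unfolding x_def using W0_pos by (intro tendsto_divide tendsto_alpha_denom) auto
  then have "((\<lambda>\<alpha>. (1 + \<alpha> * x \<alpha>) powr (1 / \<alpha>)) \<longlongrightarrow> zeta \<omega> \<phi> 0) (at 0)"
    unfolding zeta_zero by (rule tendsto_one_plus_powr_inverse)
  moreover have "\<forall>\<^sub>F \<alpha> in at 0. \<alpha> \<in> {-1<..<1::real} - {0}"
    by (rule eventually_at_in_open) auto
  then have "\<forall>\<^sub>F \<alpha> in at 0. (1 + \<alpha> * x \<alpha>) powr (1 / \<alpha>) = zeta \<omega> \<phi> \<alpha>"
  proof eventually_elim
    case (elim \<alpha>)
    then have "admissible \<alpha>" by (auto simp: admissible_def)
    then have "denom \<alpha> \<noteq> 0" using ratio_pos by fastforce
    then have "numer \<alpha> / denom \<alpha> = 1 + \<alpha> * x \<alpha>"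
      using elim defect_eq[OF \<open>admissible \<alpha>\<close>] by (simp add: x_def field_simps)
    then show ?case using zeta_admissible[OF \<open>admissible \<alpha>\<close>] by simp
  qed
  ultimately show ?thesis
    unfolding isCont_def by (rule Lim_transform_eventually)
qed

lemma zeta_pos:
  assumes "admissible \<alpha>"
  shows "zeta \<omega> \<phi> \<alpha> > 0"
  unfolding zeta_admissible[OF assms] powr_gt_zero using ratio_pos[OF assms] by linarith

lemma numer_eq_zeta_powr: "admissible \<alpha> \<Longrightarrow> numer \<alpha> = zeta \<omega> \<phi> \<alpha> powr \<alpha> * denom \<alpha>"
proof -
  assume \<alpha>: "admissible \<alpha>"
  then have "\<alpha> \<noteq> 0" by (auto simp: admissible_def)
  have "zeta \<omega> \<phi> \<alpha> powr \<alpha> = (numer \<alpha> / denom \<alpha>) powr (1 / \<alpha> * \<alpha>)"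
    by (simp add: zeta_admissible[OF \<alpha>] powr_powr)
  also have "1 / \<alpha> * \<alpha> = 1"
    using \<open>\<alpha> \<noteq> 0\<close> by simp
  also have "(numer \<alpha> / denom \<alpha>) powr 1 = numer \<alpha> / denom \<alpha>"
    using ratio_pos[OF \<alpha>] by (intro powr_one) simp
  finally show ?thesis
    using ratio_pos[OF \<alpha>] by (auto simp: field_simps)
qed

lemma zeta_le_of_numer_le:
  assumes \<beta>: "admissible \<beta>" and "z > 0" and le: "numer \<beta> \<le> z powr \<beta> * denom \<beta>"
  shows "zeta \<omega> \<phi> \<beta> \<le> z"
proof -
  have "(numer \<beta> / denom \<beta>) powr (1 / \<beta>) \<le> (z powr \<beta>) powr (1 / \<beta>)"
  proof (cases "\<beta> > 0")
    case True
    then have "numer \<beta> / denom \<beta> \<le> z powr \<beta>"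
      using le denom_pos[OF True] by (simp add: divide_le_eq)
    then show ?thesis using ratio_pos[OF \<beta>] True by (intro powr_mono2) auto
  next
    case False
    then have "\<beta> < 0" "-1 < \<beta>" using \<beta> by (auto simp: admissible_def)
    then have "z powr \<beta> \<le> numer \<beta> / denom \<beta>"
      using le denom_neg[of \<beta>] by (simp add: le_divide_eq)
    then show ?thesis using \<open>z > 0\<close> \<open>\<beta> < 0\<close> by (intro powr_mono2') auto
  qed
  moreover have "\<beta> \<noteq> 0" using \<beta> by (auto simp: admissible_def)
  ultimately show ?thesis
    using zeta_admissible[OF \<beta>] \<open>z > 0\<close> by (simp add: powr_powr)
qed

lemma sign_change_W_comp_P:
  assumes "z > 0" "0 < t" "0 < s"
    and "W (inverse z * t) < W (P t)" "W (P s) < W (inverse z * s)"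
  shows "t < s"
proof (rule ccontr)
  assume "\<not> t < s"
  have "P t < inverse z * t"
    using W_antimono[of "inverse z * t" "P t"] assms(4) by force
  moreover have "inverse z * s < P s"
    using W_antimono[of "P s" "inverse z * s"] assms(5) by force
  ultimately have "P t / t < inverse z" "inverse z < P s / s"
    using assms by (simp_all add: divide_less_eq less_divide_eq mult.commute)
  then show False using P_div_mono[of s t] \<open>\<not> t < s\<close> assms by simp
qed

text \<open>\<open>mellin_nonpos_of_sign_change\<close> applied to \<open>W \<circ> P - W (t / z)\<close>, whose Mellin transform at
  an admissible \<open>\<gamma>\<close> is \<open>numer \<gamma> - z powr \<gamma> * denom \<gamma>\<close>.\<close>
lemma numer_le_scaled_denom:
  assumes \<alpha>: "admissible \<alpha>" and \<beta>: "admissible \<beta>" and "\<alpha> < \<beta>" "z > 0"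
    and balanced: "numer \<alpha> = z powr \<alpha> * denom \<alpha>"
  shows "numer \<beta> \<le> z powr \<beta> * denom \<beta>"
proof -
  define f where "f t = W (P t) - W (inverse z * t)" for t
  have f_mellin: "mellin_integrable f \<gamma> \<and> mellin f \<gamma> = numer \<gamma> - z powr \<gamma> * denom \<gamma>"
    if "admissible \<gamma>" for \<gamma>
  proof -
    have f_eq: "f = (\<lambda>t. (W (P t) - shift \<gamma>) - (W (inverse z * t) - shift \<gamma>))"
      by (simp add: f_def fun_eq_iff)
    have scaled: "mellin_integrable (\<lambda>t. W (inverse z * t) - shift \<gamma>) \<gamma>"
      "mellin (\<lambda>t. W (inverse z * t) - shift \<gamma>) \<gamma> = z powr \<gamma> * denom \<gamma>"
      using mellin_scale[of "inverse z" "\<lambda>t. W t - shift \<gamma>" \<gamma>] denom_integrable[OF that] \<open>z > 0\<close>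
      by (simp_all add: denom_def powr_minus inverse_powr)
    show ?thesis
      unfolding f_eq numer_def
      using mellin_diff[OF numer_integrable[OF that] scaled(1)]
        mellin_integrable_diff[OF numer_integrable[OF that] scaled(1)] scaled(2)
      by simp
  qed
  have "mellin f \<beta> \<le> 0"
    using f_mellin[OF \<alpha>] f_mellin[OF \<beta>] \<open>\<alpha> < \<beta>\<close> balanced sign_change_W_comp_P[OF \<open>z > 0\<close>]
    by (intro mellin_nonpos_of_sign_change) (auto simp: f_def)
  then show ?thesis using f_mellin[OF \<beta>] by simp
qed

lemma zeta_le_admissible:
  assumes "admissible \<alpha>" "admissible \<beta>" "\<alpha> \<le> \<beta>"
  shows "zeta \<omega> \<phi> \<beta> \<le> zeta \<omega> \<phi> \<alpha>"
proof (cases "\<alpha> = \<beta>")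
  case False
  then show ?thesis
    using assms zeta_pos numer_eq_zeta_powr
    by (intro zeta_le_of_numer_le numer_le_scaled_denom[of \<alpha>]) auto
qed simp

lemma zeta_antimono: "antimono_on {-1<..} (zeta \<omega> \<phi>)"
proof (rule antimono_on_join[OF isCont_zeta_0])
  show "antimono_on {-1<..<0} (zeta \<omega> \<phi>)" "antimono_on {0<..} (zeta \<omega> \<phi>)"
    by (auto intro!: monotone_onI zeta_le_admissible simp: admissible_def)
qed

lemma zeta_continuous: "continuous_on {-1<..} (zeta \<omega> \<phi>)"
proof (intro continuous_at_imp_continuous_on ballI)
  have pos: "continuous_on {0<..} (zeta \<omega> \<phi>)"
    by (rule continuous_on_zeta_branch[where C = 0]) (auto simp: admissible_def shift_def)
  have neg: "continuous_on {-1<..<0} (zeta \<omega> \<phi>)"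
    by (rule continuous_on_zeta_branch[where C = "W 0"]) (auto simp: admissible_def shift_def)
  fix \<alpha> :: real assume "\<alpha> \<in> {-1<..}"
  then consider "\<alpha> = 0" | "\<alpha> \<in> {0<..}" | "\<alpha> \<in> {-1<..<0}" by fastforce
  then show "isCont (zeta \<omega> \<phi>) \<alpha>"
    by cases (use isCont_zeta_0 pos neg in \<open>auto simp: continuous_on_eq_continuous_at\<close>)
qed

lemma zeta_linear:
  assumes "l > 0" "\<And>t. t \<ge> 0 \<Longrightarrow> \<phi> t = l * t" "\<alpha> > -1"
  shows "zeta \<omega> \<phi> \<alpha> = 1 / l"
proof -
  have admissible_case: "zeta \<omega> \<phi> \<beta> = 1 / l" if "admissible \<beta>" for \<beta>
  proof -
    have "numer \<beta> = mellin (\<lambda>t. W (l * t) - shift \<beta>) \<beta>"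
      unfolding numer_def using assms(2) by (intro mellin_cong) (simp add: P_def)
    also have "\<dots> = l powr (- \<beta>) * denom \<beta>"
      using mellin_scale(2)[OF assms(1)] by (simp add: denom_def)
    moreover have "denom \<beta> \<noteq> 0" using ratio_pos[OF that] by auto
    ultimately have "zeta \<omega> \<phi> \<beta> = (l powr (- \<beta>)) powr (1 / \<beta>)"
      by (simp add: zeta_admissible[OF that])
    also have "\<dots> = l powr (- \<beta> * (1 / \<beta>))"
      by (rule powr_powr)
    also have "- \<beta> * (1 / \<beta>) = - 1"
      using that by (auto simp: admissible_def)
    finally show ?thesis
      using assms(1) by (simp add: powr_neg_one)
  qed
  show ?thesis
  proof (cases "\<alpha> = 0")
    case True
    have "zeta \<omega> \<phi> (1/2) \<le> zeta \<omega> \<phi> 0" "zeta \<omega> \<phi> 0 \<le> zeta \<omega> \<phi> (-1/2)"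
      using zeta_antimono by (auto simp: monotone_on_def)
    then show ?thesis using True admissible_case[of "1/2"] admissible_case[of "-1/2"]
      by (simp add: admissible_def)
  next
    case False
    then show ?thesis using assms(3) by (intro admissible_case) (auto simp: admissible_def)
  qed
qed

end

theorem lemma17:
  fixes \<omega> \<phi> :: "real \<Rightarrow> real"
  assumes \<omega>_nonneg: "\<And>t. t \<ge> 0 \<Longrightarrow> \<omega> t \<ge> 0"
    and \<omega>_decr: "antimono_on {0..} \<omega>"
    and \<omega>_int_pos: "\<And>\<alpha>. \<alpha> > 0 \<Longrightarrow>
          set_integrable lborel {0<..} (\<lambda>t. t powr (\<alpha> - 1) * \<omega> t) \<and>
          0 < (LINT t:{0<..}|lborel. t powr (\<alpha> - 1) * \<omega> t)"
    and \<omega>_int_neg: "\<And>\<alpha>. -1 < \<alpha> \<Longrightarrow> \<alpha> < 0 \<Longrightarrow>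
          set_integrable lborel {0<..} (\<lambda>t. t powr (\<alpha> - 1) * (\<omega> 0 - \<omega> t)) \<and>
          0 < (LINT t:{0<..}|lborel. t powr (\<alpha> - 1) * (\<omega> 0 - \<omega> t))"
    and \<phi>_nonneg: "\<And>t. t \<ge> 0 \<Longrightarrow> \<phi> t \<ge> 0"
    and \<phi>_nonzero: "\<exists>t\<ge>0. \<phi> t \<noteq> 0"
    and \<phi>_0: "\<phi> 0 = 0"
    and \<phi>_incr: "mono_on {0<..} \<phi>"
    and \<phi>_quot_incr: "mono_on {0<..} (\<lambda>t. \<phi> t / t)"
  shows "continuous_on {-1<..} (zeta \<omega> \<phi>) \<and> antimono_on {-1<..} (zeta \<omega> \<phi>) \<and>
         ((\<exists>l>0. \<forall>t\<ge>0. \<phi> t = l * t) \<longrightarrow> (\<exists>c. \<forall>\<alpha>>-1. zeta \<omega> \<phi> \<alpha> = c))"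
proof -
  interpret zeta_setting \<omega> \<phi>
    by (rule zeta_setting.intro) (fact assms)+
  show ?thesis
    using zeta_continuous zeta_antimono zeta_linear by blast
qed

end
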